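(* Let $G$ be a finite group and $p$ a prime. Let $\mathcal P(G,1)$ be the number of elements of $G$ of order divisible by $p$, and let $\mathbf 1_G$ denote the trivial $\mathbb{Z}_p[G]$-lattice. Then $$v_p(C_{\theta_G}(\mathbf 1_G))=-v_p(|G|)+\frac{1}{|G|}\sum_{g\in G}v_p(|g|)+\frac{\mathcal P(G,1)}{|G|(p-1)},$$ where $|g|$ denotes the order of $g$.
   Context: Artin relation: there are unique $\alpha_H\in\mathbb{Q}$, for $H$ running over representatives of conjugacy classes of cyclic subgroups of $G$, with $[\mathbf 1]=\sum_H\alpha_H[\mathbb{Q}[G/H]]$ in the rational representation ring tensored with $\mathbb{Q}$. The Artin relation is $\theta_G=[G]-\sum_H\alpha_H[H]$, a formal $\mathbb{Q}$-combination of symbols $[H]$ (standing for the $G$-sets $G/H$). For such a combination $\theta=\sum_K\beta_K[K]$ that is a rational Brauer relation, the regulator constant of the trivial module satisfies $$v_p(C_\theta(\mathbf 1_G))=-\sum_K\beta_K\,v_p(|K|).$$ This is the general regulator constant $\prod_i\det(\tfrac1{|H_i|}\langle\ ,\ \rangle|_{M^{H_i}})/\prod_j\det(\tfrac1{|H'_j|}\langle\ ,\ \rangle|_{M^{H'_j}})$ for an integral relation $\sum_i[H_i]-\sum_j[H'_j]$, evaluated at $M=\mathbb{Z}_p$ with form $\langle x,y\rangle=xy$, and extended linearly to rational relations. *)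

theory Defs
  imports "HOL-Algebra.Algebra" "HOL-Computational_Algebra.Primes"
begin

definition cyclic_subgroups :: "('a, 'b) monoid_scheme \<Rightarrow> 'a set set" where
  "cyclic_subgroups G = {H. \<exists>g\<in>carrier G. H = generate G {g}}"

definition conj_subgroups :: "('a, 'b) monoid_scheme \<Rightarrow> 'a set \<Rightarrow> 'a set \<Rightarrow> bool" where
  "conj_subgroups G H K = (\<exists>x\<in>carrier G. K = (\<lambda>h. x \<otimes>\<^bsub>G\<^esub> h \<otimes>\<^bsub>G\<^esub> inv\<^bsub>G\<^esub> x) ` H)"

definition cyc_classes :: "('a, 'b) monoid_scheme \<Rightarrow> 'a set set set" where
  "cyc_classes G = (\<lambda>H. {K \<in> cyclic_subgroups G. conj_subgroups G H K}) ` cyclic_subgroups G"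

definition cls_rep :: "'a set set \<Rightarrow> 'a set" where
  "cls_rep c = (SOME H. H \<in> c)"

(* character of the permutation representation Q[G/H]: number of cosets xH fixed by g *)
definition perm_char :: "('a, 'b) monoid_scheme \<Rightarrow> 'a set \<Rightarrow> 'a \<Rightarrow> nat" where
  "perm_char G H g = card {C. (\<exists>x\<in>carrier G. C = l_coset G x H) \<and> l_coset G g C = C}"

(* The coefficients alpha_H (indexed by conjugacy classes of cyclic subgroups) with
   [1] = sum_H alpha_H [Q[G/H]] in R_Q(G) (x) Q; equality in R_Q(G) (x) Q is equality of
   characters. *)
definition artin_alpha :: "('a, 'b) monoid_scheme \<Rightarrow> 'a set set \<Rightarrow> rat" where
  "artin_alpha G = (THE \<alpha>. (\<forall>c. c \<notin> cyc_classes G \<longrightarrow> \<alpha> c = 0) \<and>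
      (\<forall>g\<in>carrier G. (\<Sum>c\<in>cyc_classes G. \<alpha> c * of_nat (perm_char G (cls_rep c) g)) = 1))"

(* Artin relation theta_G = [G] - sum_H alpha_H [H], as Q-coefficients on subgroups *)
definition artin_relation :: "('a, 'b) monoid_scheme \<Rightarrow> 'a set \<Rightarrow> rat" where
  "artin_relation G K = (if K = carrier G then 1 else 0)
      - (\<Sum>c\<in>cyc_classes G. if cls_rep c = K then artin_alpha G c else 0)"

definition rat_vp :: "nat \<Rightarrow> rat \<Rightarrow> int" where
  "rat_vp p r = int (multiplicity p (nat \<bar>fst (quotient_of r)\<bar>))
               - int (multiplicity p (nat (snd (quotient_of r))))"

(* v_p of the regulator constant of the trivial Z_p[G]-lattice (form <x,y> = xy) w.r.t. a
   rational combination beta of subgroups: for an integral relation this is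
   sum_i v_p(det(1/|H_i| <,>|M^{H_i}|)) - sum_j v_p(det(1/|H'_j| <,>|M^{H'_j}|)), where
   M^H = Z_p and the determinant is 1/|H|; extended linearly to rational combinations. *)
definition vp_regconst_trivial :: "('a, 'b) monoid_scheme \<Rightarrow> nat \<Rightarrow> ('a set \<Rightarrow> rat) \<Rightarrow> rat" where
  "vp_regconst_trivial G p \<beta> =
     (\<Sum>K\<in>{K. subgroup K G}. \<beta> K * of_int (rat_vp p (1 / of_nat (card K))))"

end

theory Submission
  imports Defs
begin

text \<open>Let \<open>w(d) = v\<^sub>p(d) + [p dvd d] / (p - 1)\<close> (\<open>ord_weight\<close>). The elements of a cyclic group
of order \<open>n\<close> have orders \<open>n / gcd(n, k)\<close>, \<open>0 \<le> k < n\<close>, and their weights add up to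
\<open>n v\<^sub>p(n)\<close>. As \<open>g \<mapsto> w(|g|)\<close> is a class function, Frobenius reciprocity turns its pairing
with the permutation character of \<open>G/H\<close>, \<open>H\<close> cyclic, into \<open>[G:H] |H| v\<^sub>p(|H|) = |G| v\<^sub>p(|H|)\<close>.
Pairing the defining identity \<open>\<Sum>\<^sub>H \<alpha>\<^sub>H [\<bbbQ>[G/H]] = 1\<close> with \<open>w(|g|)\<close> therefore gives
\<open>|G| \<Sum>\<^sub>H \<alpha>\<^sub>H v\<^sub>p(|H|) = \<Sum>\<^sub>g w(|g|)\<close>, and \<open>v\<^sub>p(C\<^sub>\<theta>(1)) = -v\<^sub>p(|G|) + \<Sum>\<^sub>H \<alpha>\<^sub>H v\<^sub>p(|H|)\<close>.
The \<open>\<alpha>\<^sub>H\<close> exist and are unique since the number of cosets of \<open>H\<close> fixed by a cyclic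
subgroup \<open>K\<close> vanishes unless \<open>K\<close> is conjugate into \<open>H\<close>: a triangular system.\<close>

section \<open>Unitriangular linear systems\<close>

definition solves_linear_system ::
  "'i set \<Rightarrow> ('i \<Rightarrow> 'i \<Rightarrow> 'a::comm_semiring_1) \<Rightarrow> ('i \<Rightarrow> 'a) \<Rightarrow> ('i \<Rightarrow> 'a) \<Rightarrow> bool" where
  "solves_linear_system I a b x \<longleftrightarrow>
     (\<forall>i. i \<notin> I \<longrightarrow> x i = 0) \<and> (\<forall>j\<in>I. (\<Sum>i\<in>I. x i * a i j) = b j)"

lemma solves_linear_system_insert_iff:
  fixes a :: "'i \<Rightarrow> 'i \<Rightarrow> 'a::field"
  assumes "finite S" "k \<notin> S" and col: "\<And>i. i \<in> S \<Longrightarrow> a i k = 0" and akk: "a k k \<noteq> 0"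
  shows "solves_linear_system (insert k S) a b x \<longleftrightarrow>
    x k = b k / a k k \<and> solves_linear_system S a (\<lambda>j. b j - x k * a k j) (x(k := 0))"
proof -
  have sum_S: "(\<Sum>i\<in>S. (x(k := 0)) i * a i j) = (\<Sum>i\<in>S. x i * a i j)" for j
    using \<open>k \<notin> S\<close> by (intro sum.cong) auto
  have sum_insert: "(\<Sum>i\<in>insert k S. x i * a i j) = x k * a k j + (\<Sum>i\<in>S. x i * a i j)" for j
    using assms(1,2) by simp
  have sum_col: "(\<Sum>i\<in>S. x i * a i k) = 0"
    using col by simp
  show ?thesis
    unfolding solves_linear_system_def sum_S
    using akk \<open>k \<notin> S\<close> by (auto simp: sum_insert sum_col field_simps)
qed

lemma unitriangular_system_unique_solution:
  fixes a :: "'i \<Rightarrow> 'i \<Rightarrow> 'a::field" and b :: "'i \<Rightarrow> 'a" and s :: "'i \<Rightarrow> nat"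
  assumes "finite I"
    and triangular: "\<And>i j. i \<in> I \<Longrightarrow> j \<in> I \<Longrightarrow> a i j \<noteq> 0 \<Longrightarrow> i = j \<or> s j < s i"
    and diagonal: "\<And>i. i \<in> I \<Longrightarrow> a i i \<noteq> 0"
  shows "\<exists>!x. solves_linear_system I a b x"
  using \<open>finite I\<close> triangular diagonal
proof (induction I arbitrary: b rule: finite_ranking_induct[where f = s])
  case empty
  show ?case by (auto simp: solves_linear_system_def intro!: ex1I[of _ "\<lambda>_. 0"])
next
  case (insert k S)
  show ?case
  proof (cases "k \<in> S")
    case True
    then show ?thesis using insert.IH insert.prems by (simp add: insert_absorb)
  next
    case k: False
    txt \<open>Since \<open>k\<close> has maximal size, column \<open>k\<close> vanishes off the diagonal: the equation
      at \<open>k\<close> determines \<open>x k\<close>, and the rest is a system on \<open>S\<close>.\<close>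
    have col: "a i k = 0" if "i \<in> S" for i
      using insert.prems(1)[of i k] insert.hyps(2)[OF that] that k by force
    have solves_insert: "solves_linear_system (insert k S) a b x \<longleftrightarrow>
      x k = b k / a k k \<and> solves_linear_system S a (\<lambda>j. b j - x k * a k j) (x(k := 0))" for x
      using insert.prems(2)[of k] by (intro solves_linear_system_insert_iff \<open>finite S\<close> k col) simp_all
    obtain y where y: "solves_linear_system S a (\<lambda>j. b j - b k / a k k * a k j) y"
      and y_unique: "\<And>z. solves_linear_system S a (\<lambda>j. b j - b k / a k k * a k j) z \<Longrightarrow> z = y"
      using insert.IH[of "\<lambda>j. b j - b k / a k k * a k j"] insert.prems by (auto elim!: ex1E)
    have "y k = 0" using y k unfolding solves_linear_system_def by simp
    then have "(y(k := b k / a k k))(k := 0) = y" by (metis fun_upd_triv fun_upd_upd)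
    then have "solves_linear_system (insert k S) a b (y(k := b k / a k k))"
      using y unfolding solves_insert by simp
    moreover have "z = y(k := b k / a k k)" if "solves_linear_system (insert k S) a b z" for z
      using that y_unique[of "z(k := 0)"] unfolding solves_insert
      by (metis fun_upd_triv fun_upd_upd)
    ultimately show ?thesis by blast
  qed
qed

section \<open>Orders in cyclic groups and \<open>p\<close>-adic valuations\<close>

definition ord_weight :: "nat \<Rightarrow> nat \<Rightarrow> rat" where
  "ord_weight p d = of_nat (multiplicity p d) + (if p dvd d then 1 / (of_nat p - 1) else 0)"

lemma multiplicity_div_gcd_of_not_dvd:
  fixes n k :: nat
  assumes "Factorial_Ring.prime p" "n > 0" "\<not> p dvd k"
  shows "multiplicity p (n div gcd n k) = multiplicity p n"
proof -
  have "multiplicity p (gcd n k) = 0"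
    using assms(3) by (meson dvd_trans gcd_dvd2 not_dvd_imp_multiplicity_0)
  moreover have "multiplicity p n = multiplicity p (gcd n k) + multiplicity p (n div gcd n k)"
    using prime_elem_multiplicity_mult_distrib[of p "gcd n k" "n div gcd n k"] assms(1,2)
    by (simp add: prime_imp_prime_elem dvd_div_eq_0_iff)
  ultimately show ?thesis by simp
qed

lemma card_non_multiples_below:
  fixes p m :: nat
  assumes "p > 0"
  shows "card {k. k < p * m \<and> \<not> p dvd k} = (p - 1) * m"
proof -
  have "{k. k < p * m \<and> p dvd k} = (\<lambda>j. p * j) ` {..<m}"
    using assms by (auto elim!: dvdE)
  moreover have "inj_on (\<lambda>j. p * j) {..<m}"
    using assms by (auto simp: inj_on_def)
  ultimately have "card {k. k < p * m \<and> p dvd k} = m"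
    by (simp add: card_image)
  moreover have "{k. k < p * m \<and> \<not> p dvd k} = {..<p * m} - {k. k < p * m \<and> p dvd k}"
    by auto
  ultimately show ?thesis
    by (simp add: card_Diff_subset subset_eq diff_mult_distrib)
qed

lemma sum_div_gcd_multiples:
  fixes p m :: nat
  assumes "p > 0"
  shows "(\<Sum>k | k < p * m \<and> p dvd k. f (p * m div gcd (p * m) k)) = (\<Sum>j<m. f (m div gcd m j))"
proof -
  have "{k. k < p * m \<and> p dvd k} = (\<lambda>j. p * j) ` {..<m}"
    using assms by (auto elim!: dvdE)
  moreover have "inj_on (\<lambda>j. p * j) {..<m}"
    using assms by (auto simp: inj_on_def)
  ultimately show ?thesis
    using assms by (simp add: sum.reindex gcd_mult_distrib_nat[symmetric])
qed

lemma ord_weight_div_gcd_of_not_dvd: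
  assumes p: "Factorial_Ring.prime p" and "n > 0" "p dvd n" "\<not> p dvd k"
  shows "ord_weight p (n div gcd n k) = of_nat (multiplicity p n) + 1 / (of_nat p - 1)"
proof -
  have "multiplicity p (n div gcd n k) = multiplicity p n"
    using multiplicity_div_gcd_of_not_dvd[OF p] assms(2,4) by blast
  moreover have "multiplicity p n > 0"
    using assms(2,3) p by (simp add: prime_multiplicity_gt_zero_iff)
  ultimately have "p dvd n div gcd n k"
    by (metis not_dvd_imp_multiplicity_0 less_irrefl)
  with \<open>multiplicity p (n div gcd n k) = multiplicity p n\<close> show ?thesis
    unfolding ord_weight_def by simp
qed

lemma sum_ord_weight_div_gcd:
  assumes p: "Factorial_Ring.prime (p :: nat)" and "n > 0"
  shows "(\<Sum>k<n. ord_weight p (n div gcd n k)) = of_nat (n * multiplicity p n)"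
  using \<open>n > 0\<close>
proof (induction n rule: less_induct)
  case (less n)
  have p1: "p > 1" using p prime_gt_1_nat by blast
  show ?case
  proof (cases "p dvd n")
    case False
    have "\<not> p dvd n div gcd n k" for k
      using False by (metis dvd_trans dvd_div_mult_self gcd_dvd1 dvd_triv_left)
    then show ?thesis
      using False by (simp add: ord_weight_def not_dvd_imp_multiplicity_0)
  next
    case True
    then obtain m where n: "n = p * m" by (elim dvdE)
    have "m > 0" "m < n" using n p1 less.prems by auto
    have mult_n: "multiplicity p n = Suc (multiplicity p m)"
      using n \<open>m > 0\<close> p p1 multiplicity_times_same[of m p] by (simp add: prime_def)
    have "{..<n} = {k. k < n \<and> p dvd k} \<union> {k. k < n \<and> \<not> p dvd k}" by auto
    then have "(\<Sum>k<n. ord_weight p (n div gcd n k))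
        = (\<Sum>k | k < n \<and> p dvd k. ord_weight p (n div gcd n k))
          + (\<Sum>k | k < n \<and> \<not> p dvd k. ord_weight p (n div gcd n k))"
      by (simp add: sum.union_disjoint disjoint_iff)
    also have "(\<Sum>k | k < n \<and> p dvd k. ord_weight p (n div gcd n k)) = of_nat (m * multiplicity p m)"
      using sum_div_gcd_multiples[where p = p and m = m and f = "ord_weight p"] less.IH[OF \<open>m < n\<close> \<open>m > 0\<close>] n p1 by simp
    also have "(\<Sum>k | k < n \<and> \<not> p dvd k. ord_weight p (n div gcd n k))
        = of_nat ((p - 1) * m) * (of_nat (multiplicity p n) + 1 / (of_nat p - 1))"
      using ord_weight_div_gcd_of_not_dvd[OF p less.prems True] card_non_multiples_below[of p m] n p1
      by simp
    also have "of_nat (m * multiplicity p m) + of_nat ((p - 1) * m) * (of_nat (multiplicity p n) + 1 / (of_nat p - 1))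
        = (of_nat (n * multiplicity p n) :: rat)"
      using p1 unfolding mult_n by (simp add: n of_nat_diff field_simps)
    finally show ?thesis .
  qed
qed

lemma rat_vp_one_div_of_nat:
  assumes "n > 0"
  shows "rat_vp p (1 / of_nat n) = - int (multiplicity p n)"
proof -
  have "(1::rat) / of_nat n = Fract 1 (int n)"
    by (simp add: Fract_of_int_quotient)
  then have "quotient_of (1 / of_nat n) = (1, int n)"
    using assms by (simp add: quotient_of_Fract normalize_def)
  then show ?thesis unfolding rat_vp_def by simp
qed

section \<open>Conjugate subgroups and fixed cosets\<close>

definition conjugate :: "('a, 'b) monoid_scheme \<Rightarrow> 'a \<Rightarrow> 'a set \<Rightarrow> 'a set" where
  "conjugate G x H = (\<lambda>h. x \<otimes>\<^bsub>G\<^esub> h \<otimes>\<^bsub>G\<^esub> inv\<^bsub>G\<^esub> x) ` H"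

lemma conj_subgroups_iff: "conj_subgroups G H K \<longleftrightarrow> (\<exists>x\<in>carrier G. K = conjugate G x H)"
  unfolding conj_subgroups_def conjugate_def ..

definition fixed_lcosets :: "('a, 'b) monoid_scheme \<Rightarrow> 'a set \<Rightarrow> 'a set \<Rightarrow> 'a set set" where
  "fixed_lcosets G H K = {C \<in> lcosets\<^bsub>G\<^esub> H. \<forall>k\<in>K. k <#\<^bsub>G\<^esub> C = C}"

definition cyc_class :: "('a, 'b) monoid_scheme \<Rightarrow> 'a set \<Rightarrow> 'a set set" where
  "cyc_class G H = {K \<in> cyclic_subgroups G. conj_subgroups G H K}"

lemma cyc_classes_eq_image: "cyc_classes G = cyc_class G ` cyclic_subgroups G"
  unfolding cyc_classes_def cyc_class_def ..

context group
begin

lemma inv_mult_cancel [simp]: "x \<in> carrier G \<Longrightarrow> y \<in> carrier G \<Longrightarrow> inv x \<otimes> (x \<otimes> y) = y"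
  by (simp flip: m_assoc)

lemma mult_inv_cancel [simp]: "x \<in> carrier G \<Longrightarrow> y \<in> carrier G \<Longrightarrow> x \<otimes> (inv x \<otimes> y) = y"
  by (simp flip: m_assoc)

lemma conjugate_subset_carrier: "x \<in> carrier G \<Longrightarrow> H \<subseteq> carrier G \<Longrightarrow> conjugate G x H \<subseteq> carrier G"
  unfolding conjugate_def by auto

lemma conjugate_mono: "H \<subseteq> K \<Longrightarrow> conjugate G x H \<subseteq> conjugate G x K"
  unfolding conjugate_def by auto

lemma conjugate_one: "H \<subseteq> carrier G \<Longrightarrow> conjugate G \<one> H = H"
  unfolding conjugate_def by (auto simp: subsetD image_iff)

lemma conjugate_conjugate:
  assumes "x \<in> carrier G" "y \<in> carrier G" "H \<subseteq> carrier G"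
  shows "conjugate G x (conjugate G y H) = conjugate G (x \<otimes> y) H"
  unfolding conjugate_def image_image
  using assms by (intro image_cong refl) (auto simp: m_assoc inv_mult_group subsetD)

lemma conjugate_inv_conjugate:
  "x \<in> carrier G \<Longrightarrow> H \<subseteq> carrier G \<Longrightarrow> conjugate G (inv x) (conjugate G x H) = H"
  by (simp add: conjugate_conjugate conjugate_one)

lemma mem_conjugate_iff:
  assumes "x \<in> carrier G" "g \<in> carrier G" "H \<subseteq> carrier G"
  shows "g \<in> conjugate G x H \<longleftrightarrow> inv x \<otimes> g \<otimes> x \<in> H"
proof
  assume "g \<in> conjugate G x H"
  then obtain h where "h \<in> H" "g = x \<otimes> h \<otimes> inv x" unfolding conjugate_def by auto
  then show "inv x \<otimes> g \<otimes> x \<in> H" using assms by (simp add: m_assoc subsetD)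
next
  assume "inv x \<otimes> g \<otimes> x \<in> H"
  moreover have "g = x \<otimes> (inv x \<otimes> g \<otimes> x) \<otimes> inv x" using assms by (simp add: m_assoc)
  ultimately show "g \<in> conjugate G x H" unfolding conjugate_def by blast
qed

lemma card_conjugate: "x \<in> carrier G \<Longrightarrow> H \<subseteq> carrier G \<Longrightarrow> card (conjugate G x H) = card H"
  unfolding conjugate_def
  by (rule card_image) (auto intro!: inj_onI dest: conjugation_is_inj simp: subsetD)

lemma sum_conjugate:
  "x \<in> carrier G \<Longrightarrow> H \<subseteq> carrier G \<Longrightarrow> (\<Sum>g\<in>conjugate G x H. f g) = (\<Sum>h\<in>H. f (x \<otimes> h \<otimes> inv x))"
  unfolding conjugate_def
  by (rule sum.reindex_cong[OF _ refl refl]) (auto intro!: inj_onI dest: conjugation_is_inj simp: subsetD)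

lemma subgroup_conjugate:
  assumes x: "x \<in> carrier G" and H: "subgroup H G"
  shows "subgroup (conjugate G x H) G"
proof (rule subgroupI)
  have Hc: "H \<subseteq> carrier G" using H subgroup.subset by blast
  show "conjugate G x H \<subseteq> carrier G" using conjugate_subset_carrier[OF x Hc] .
  show "conjugate G x H \<noteq> {}" using subgroup.one_closed[OF H] unfolding conjugate_def by auto
  fix a b assume "a \<in> conjugate G x H" "b \<in> conjugate G x H"
  then have "a \<in> carrier G" "b \<in> carrier G" "inv x \<otimes> a \<otimes> x \<in> H" "inv x \<otimes> b \<otimes> x \<in> H"
    using mem_conjugate_iff[OF x _ Hc] conjugate_subset_carrier[OF x Hc] by auto
  moreover have "inv x \<otimes> inv a \<otimes> x = inv (inv x \<otimes> a \<otimes> x)"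
    "inv x \<otimes> (a \<otimes> b) \<otimes> x = (inv x \<otimes> a \<otimes> x) \<otimes> (inv x \<otimes> b \<otimes> x)"
    using x calculation(1,2) by (simp_all add: inv_mult_group m_assoc)
  ultimately show "inv a \<in> conjugate G x H" "a \<otimes> b \<in> conjugate G x H"
    using mem_conjugate_iff[OF x _ Hc] subgroup.m_inv_closed[OF H] subgroup.m_closed[OF H] by auto
qed

lemma ord_conjugate:
  assumes x: "x \<in> carrier G" and h: "h \<in> carrier G"
  shows "ord (x \<otimes> h \<otimes> inv x) = ord h"
proof -
  have pow: "(x \<otimes> h \<otimes> inv x) [^] (n::nat) = x \<otimes> h [^] n \<otimes> inv x" for n
  proof (induction n)
    case (Suc n)
    then show ?case using x h by (simp add: m_assoc)
  qed (use x in simp)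
  have "(x \<otimes> h \<otimes> inv x) [^] (n::nat) = \<one> \<longleftrightarrow> h [^] n = \<one>" for n
    unfolding pow using x h by (metis conjugation_is_inj conjugation_is_surj nat_pow_closed one_closed r_one r_inv)
  then show ?thesis using pow_eq_id x h by (metis dvd_antisym dvd_refl m_closed inv_closed)
qed

lemma lcos_fixed_iff_mem_conjugate:
  assumes H: "subgroup H G" and x: "x \<in> carrier G" and g: "g \<in> carrier G"
  shows "g <# (x <# H) = x <# H \<longleftrightarrow> g \<in> conjugate G x H"
proof -
  have Hc: "H \<subseteq> carrier G" using H subgroup.subset by blast
  have "g <# (x <# H) = x <# H \<longleftrightarrow> (g \<otimes> x) <# H = x <# H"
    using lcos_m_assoc[OF Hc g x] by simp
  also have "\<dots> \<longleftrightarrow> g \<otimes> x \<in> x <# H"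
    using l_repr_independence[OF _ x H] lcos_self[OF _ H] g x by (metis m_closed)
  also have "\<dots> \<longleftrightarrow> inv x \<otimes> g \<otimes> x \<in> H"
    using subgroup.lcos_module_imp[OF H is_group x] subgroup.lcos_module_rev[OF H is_group x] g x
    by (metis m_assoc inv_closed m_closed)
  also have "\<dots> \<longleftrightarrow> g \<in> conjugate G x H"
    using mem_conjugate_iff[OF x g Hc] by simp
  finally show ?thesis .
qed

lemma lcos_in_fixed_lcosets_iff:
  assumes H: "subgroup H G" and x: "x \<in> carrier G" and K: "K \<subseteq> carrier G"
  shows "x <# H \<in> fixed_lcosets G H K \<longleftrightarrow> K \<subseteq> conjugate G x H"
  using lcos_fixed_iff_mem_conjugate[OF H x] x K
  unfolding fixed_lcosets_def LCOSETS_def by auto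

lemma perm_char_eq_card_fixed_lcosets:
  assumes H: "subgroup H G" and g: "g \<in> carrier G"
  shows "perm_char G H g = card (fixed_lcosets G H (generate G {g}))"
proof -
  have "g <# C = C \<longleftrightarrow> (\<forall>k\<in>generate G {g}. k <# C = C)" if "C \<in> lcosets H" for C
  proof -
    obtain x where x: "x \<in> carrier G" "C = x <# H" using \<open>C \<in> lcosets H\<close> unfolding LCOSETS_def by auto
    have "generate G {g} \<subseteq> carrier G" using g generate_incl by blast
    then have "(\<forall>k\<in>generate G {g}. k <# C = C) \<longleftrightarrow> generate G {g} \<subseteq> conjugate G x H"
      using lcos_fixed_iff_mem_conjugate[OF H x(1)] x(2) by blast
    also have "\<dots> \<longleftrightarrow> g \<in> conjugate G x H"
      using generate_subgroup_incl[of "{g}" "conjugate G x H"] generate.incl[of g "{g}" G]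
        subgroup_conjugate[OF x(1) H] by blast
    finally show ?thesis using lcos_fixed_iff_mem_conjugate[OF H x(1) g] x(2) by simp
  qed
  then have "{C. (\<exists>x\<in>carrier G. C = x <# H) \<and> g <# C = C} = fixed_lcosets G H (generate G {g})"
    unfolding fixed_lcosets_def LCOSETS_def by blast
  then show ?thesis unfolding perm_char_def by simp
qed

lemma fixed_lcosets_nonempty_imp_subset_conjugate:
  assumes "subgroup H G" "K \<subseteq> carrier G" "fixed_lcosets G H K \<noteq> {}"
  obtains x where "x \<in> carrier G" "K \<subseteq> conjugate G x H"
proof -
  obtain C where C: "C \<in> fixed_lcosets G H K" using assms(3) by blast
  then obtain x where x: "x \<in> carrier G" "C = x <# H"
    unfolding fixed_lcosets_def LCOSETS_def by auto
  then show thesis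
    using that C lcos_in_fixed_lcosets_iff[OF assms(1) x(1) assms(2)] by simp
qed

lemma self_in_fixed_lcosets:
  assumes "subgroup H G"
  shows "H \<in> fixed_lcosets G H H"
  using lcos_in_fixed_lcosets_iff[OF assms one_closed subgroup.subset[OF assms]]
  by (simp add: conjugate_one lcos_mult_one subgroup.subset[OF assms])

lemma finite_fixed_lcosets:
  "finite (carrier G) \<Longrightarrow> subgroup H G \<Longrightarrow> finite (fixed_lcosets G H K)"
  using lcosets_subset_PowG unfolding fixed_lcosets_def by (auto intro: finite_subset)

lemma card_fixed_lcosets_conjugate_le:
  assumes H: "subgroup H G" and y: "y \<in> carrier G" and K: "K \<subseteq> carrier G"
    and fin: "finite (carrier G)"
  shows "card (fixed_lcosets G H (conjugate G y K)) \<le> card (fixed_lcosets G H K)"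
proof -
  have Hc: "H \<subseteq> carrier G" using H subgroup.subset by blast
  have "fixed_lcosets G H (conjugate G y K) \<subseteq> (\<lambda>C. y <# C) ` fixed_lcosets G H K"
  proof
    fix D assume D: "D \<in> fixed_lcosets G H (conjugate G y K)"
    then obtain z where z: "z \<in> carrier G" "D = z <# H"
      unfolding fixed_lcosets_def LCOSETS_def by auto
    have "conjugate G y K \<subseteq> conjugate G z H"
      using D z lcos_in_fixed_lcosets_iff[OF H z(1) conjugate_subset_carrier[OF y K]] by simp
    have "K = conjugate G (inv y) (conjugate G y K)"
      using conjugate_inv_conjugate[OF y K] by simp
    also have "\<dots> \<subseteq> conjugate G (inv y) (conjugate G z H)"
      by (rule conjugate_mono) fact
    also have "\<dots> = conjugate G (inv y \<otimes> z) H"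
      using conjugate_conjugate[OF inv_closed[OF y] z(1) Hc] .
    finally have "K \<subseteq> conjugate G (inv y \<otimes> z) H" .
    then have "(inv y \<otimes> z) <# H \<in> fixed_lcosets G H K"
      using lcos_in_fixed_lcosets_iff[OF H _ K] y z(1) by simp
    moreover have "D = y <# ((inv y \<otimes> z) <# H)"
      using lcos_m_assoc[OF Hc y] y z by simp
    ultimately show "D \<in> (\<lambda>C. y <# C) ` fixed_lcosets G H K" by blast
  qed
  then show ?thesis
    using card_mono[OF finite_imageI[OF finite_fixed_lcosets[OF fin H]]] card_image_le[OF finite_fixed_lcosets[OF fin H]]
    by (meson order_trans)
qed

lemma card_fixed_lcosets_conjugate:
  assumes "subgroup H G" "y \<in> carrier G" "K \<subseteq> carrier G" "finite (carrier G)"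
  shows "card (fixed_lcosets G H (conjugate G y K)) = card (fixed_lcosets G H K)"
  using card_fixed_lcosets_conjugate_le[OF assms]
    card_fixed_lcosets_conjugate_le[OF assms(1) inv_closed[OF assms(2)] conjugate_subset_carrier[OF assms(2,3)] assms(4)]
  by (simp add: conjugate_inv_conjugate assms)

lemma stabilizer_lcos_eq_conjugate:
  assumes H: "subgroup H G" and x: "x \<in> carrier G"
  shows "{g \<in> carrier G. g <# (x <# H) = x <# H} = conjugate G x H"
  using lcos_fixed_iff_mem_conjugate[OF H x] conjugate_subset_carrier[OF x subgroup.subset[OF H]]
  by blast

text \<open>Frobenius reciprocity for \<open>\<bbbQ>[G/H]\<close>: count the pairs \<open>(g, C)\<close> with \<open>g C = C\<close> coset by
  coset, the stabiliser of \<open>x H\<close> being \<open>x H x\<inverse>\<close>.\<close>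

lemma sum_perm_char_class_function:
  fixes f :: "'a \<Rightarrow> 'c :: comm_semiring_1"
  assumes fin: "finite (carrier G)" and H: "subgroup H G"
    and f: "\<And>x h. x \<in> carrier G \<Longrightarrow> h \<in> carrier G \<Longrightarrow> f (x \<otimes> h \<otimes> inv x) = f h"
  shows "(\<Sum>g\<in>carrier G. f g * of_nat (perm_char G H g)) = of_nat (card (lcosets H)) * (\<Sum>h\<in>H. f h)"
proof -
  have Hc: "H \<subseteq> carrier G" using H subgroup.subset by blast
  have fin_L: "finite (lcosets H)"
    using fin lcosets_subset_PowG[OF H] by (auto intro: finite_subset)
  have "perm_char G H g = card {C \<in> lcosets H. g <# C = C}" for g
    unfolding perm_char_def LCOSETS_def by (rule arg_cong[where f = card]) blast
  then have "(\<Sum>g\<in>carrier G. f g * of_nat (perm_char G H g))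
      = (\<Sum>g\<in>carrier G. \<Sum>C\<in>lcosets H. if g <# C = C then f g else 0)"
    using fin_L by (simp add: sum.If_cases Int_def mult.commute)
  also have "\<dots> = (\<Sum>C\<in>lcosets H. \<Sum>g\<in>carrier G. if g <# C = C then f g else 0)"
    by (rule sum.swap)
  also have "\<dots> = (\<Sum>C\<in>lcosets H. \<Sum>h\<in>H. f h)"
  proof (rule sum.cong[OF refl])
    fix C assume "C \<in> lcosets H"
    then obtain x where x: "x \<in> carrier G" "C = x <# H" unfolding LCOSETS_def by auto
    have "(\<Sum>g\<in>carrier G. if g <# C = C then f g else 0) = (\<Sum>g\<in>conjugate G x H. f g)"
      using fin x stabilizer_lcos_eq_conjugate[OF H x(1)] by (simp add: sum.inter_filter[symmetric])
    also have "\<dots> = (\<Sum>h\<in>H. f h)"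
      unfolding sum_conjugate[OF x(1) Hc] using f x(1) Hc by (auto intro: sum.cong)
    finally show "(\<Sum>g\<in>carrier G. if g <# C = C then f g else 0) = (\<Sum>h\<in>H. f h)" .
  qed
  finally show ?thesis by simp
qed

section \<open>Conjugacy classes of cyclic subgroups\<close>

lemma subgroup_if_cyclic:
  assumes "H \<in> cyclic_subgroups G"
  shows "subgroup H G"
proof -
  obtain g where "g \<in> carrier G" "H = generate G {g}"
    using assms unfolding cyclic_subgroups_def by blast
  then show ?thesis by (simp add: generate_is_subgroup)
qed

lemma conj_subgroups_refl: "H \<subseteq> carrier G \<Longrightarrow> conj_subgroups G H H"
  unfolding conj_subgroups_iff using conjugate_one one_closed by metis

lemma conj_subgroups_sym:
  assumes "H \<subseteq> carrier G" "conj_subgroups G H K"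
  shows "conj_subgroups G K H"
proof -
  obtain x where "x \<in> carrier G" "K = conjugate G x H"
    using assms(2) unfolding conj_subgroups_iff by blast
  then have "inv x \<in> carrier G" "H = conjugate G (inv x) K"
    using conjugate_inv_conjugate assms(1) by simp_all
  then show ?thesis unfolding conj_subgroups_iff by blast
qed

lemma conj_subgroups_trans:
  assumes "H \<subseteq> carrier G" "conj_subgroups G H K" "conj_subgroups G K L"
  shows "conj_subgroups G H L"
proof -
  obtain x y where "x \<in> carrier G" "K = conjugate G x H" "y \<in> carrier G" "L = conjugate G y K"
    using assms(2,3) unfolding conj_subgroups_iff by blast
  then have "y \<otimes> x \<in> carrier G" "L = conjugate G (y \<otimes> x) H"
    using conjugate_conjugate assms(1) by simp_all
  then show ?thesis unfolding conj_subgroups_iff by blast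
qed

lemma cyc_class_eq:
  assumes H: "H \<subseteq> carrier G" and HK: "conj_subgroups G H K"
  shows "cyc_class G K = cyc_class G H"
proof -
  have "K \<subseteq> carrier G"
    using HK conjugate_subset_carrier[OF _ H] unfolding conj_subgroups_iff by blast
  then have "conj_subgroups G K L \<longleftrightarrow> conj_subgroups G H L" for L
    using conj_subgroups_trans[OF H HK] conj_subgroups_trans[OF _ conj_subgroups_sym[OF H HK]] by blast
  then show ?thesis unfolding cyc_class_def by simp
qed

lemma cls_rep_cyc_class:
  assumes "H \<in> cyclic_subgroups G"
  shows "cls_rep (cyc_class G H) \<in> cyc_class G H"
proof -
  have "H \<in> cyc_class G H"
    using assms conj_subgroups_refl[OF subgroup.subset[OF subgroup_if_cyclic[OF assms]]]
    unfolding cyc_class_def by simp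
  then show ?thesis unfolding cls_rep_def by (rule someI)
qed

lemma cls_rep_mem_cyc_classes:
  assumes "c \<in> cyc_classes G"
  shows "cls_rep c \<in> cyclic_subgroups G" and "c = cyc_class G (cls_rep c)"
proof -
  obtain H where H: "H \<in> cyclic_subgroups G" "c = cyc_class G H"
    using assms unfolding cyc_classes_eq_image by blast
  then have "cls_rep c \<in> cyclic_subgroups G" "conj_subgroups G H (cls_rep c)"
    using cls_rep_cyc_class[OF H(1)] unfolding cyc_class_def by auto
  then show "cls_rep c \<in> cyclic_subgroups G" "c = cyc_class G (cls_rep c)"
    using cyc_class_eq[OF subgroup.subset[OF subgroup_if_cyclic[OF H(1)]]] H(2) by simp_all
qed

lemma subgroup_cls_rep: "c \<in> cyc_classes G \<Longrightarrow> subgroup (cls_rep c) G"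
  using subgroup_if_cyclic cls_rep_mem_cyc_classes(1) by blast

lemma finite_cyc_classes:
  assumes "finite (carrier G)"
  shows "finite (cyc_classes G)"
proof -
  have "cyclic_subgroups G \<subseteq> Pow (carrier G)"
    using subgroup_if_cyclic subgroup.subset by blast
  then show ?thesis
    unfolding cyc_classes_eq_image using assms by (auto intro: finite_subset)
qed

lemma cyc_classes_eqI:
  assumes "c \<in> cyc_classes G" "d \<in> cyc_classes G" "conj_subgroups G (cls_rep c) (cls_rep d)"
  shows "c = d"
  using cyc_class_eq[OF subgroup.subset[OF subgroup_if_cyclic] assms(3)] cls_rep_mem_cyc_classes assms(1,2)
  by metis

lemma cls_rep_cyc_class_conjugate:
  assumes "H \<in> cyclic_subgroups G"
  obtains y where "y \<in> carrier G" "cls_rep (cyc_class G H) = conjugate G y H"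
  using cls_rep_cyc_class[OF assms] that unfolding cyc_class_def conj_subgroups_iff by blast

lemma perm_char_eq_card_fixed_lcosets_cls_rep:
  assumes fin: "finite (carrier G)" and H: "subgroup H G" and g: "g \<in> carrier G"
  shows "perm_char G H g = card (fixed_lcosets G H (cls_rep (cyc_class G (generate G {g}))))"
proof -
  have cyc: "generate G {g} \<in> cyclic_subgroups G" unfolding cyclic_subgroups_def using g by blast
  obtain y where "y \<in> carrier G" "cls_rep (cyc_class G (generate G {g})) = conjugate G y (generate G {g})"
    using cls_rep_cyc_class_conjugate[OF cyc] .
  then show ?thesis
    using perm_char_eq_card_fixed_lcosets[OF H g] card_fixed_lcosets_conjugate[OF H _ _ fin]
      subgroup.subset[OF subgroup_if_cyclic[OF cyc]] by simp
qed

section \<open>The Artin coefficients\<close>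

text \<open>\<open>perm_char G H g\<close> depends only on the conjugacy class of \<open>\<langle>g\<rangle>\<close>, so the defining
  system of the Artin coefficients has one equation per class of cyclic subgroups.\<close>

lemma artin_system_iff_cls_rep_system:
  assumes fin: "finite (carrier G)"
  shows "(\<forall>g\<in>carrier G. (\<Sum>c\<in>cyc_classes G. \<alpha> c * of_nat (perm_char G (cls_rep c) g)) = (1::rat)) \<longleftrightarrow>
    (\<forall>d\<in>cyc_classes G. (\<Sum>c\<in>cyc_classes G.
       \<alpha> c * of_nat (card (fixed_lcosets G (cls_rep c) (cls_rep d)))) = 1)"
proof -
  have "perm_char G (cls_rep c) g = card (fixed_lcosets G (cls_rep c) (cls_rep d))"
    if "c \<in> cyc_classes G" "g \<in> carrier G" "d = cyc_class G (generate G {g})" for c g d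
    using perm_char_eq_card_fixed_lcosets_cls_rep[OF fin subgroup_cls_rep[OF that(1)] that(2)] that(3) by simp
  moreover have "\<exists>g\<in>carrier G. d = cyc_class G (generate G {g})" if "d \<in> cyc_classes G" for d
    using that unfolding cyc_classes_eq_image cyclic_subgroups_def by blast
  moreover have "cyc_class G (generate G {g}) \<in> cyc_classes G" if "g \<in> carrier G" for g
    using that unfolding cyc_classes_eq_image cyclic_subgroups_def by blast
  ultimately show ?thesis by (metis (no_types, lifting) sum.cong)
qed

lemma fixed_lcosets_cls_rep_triangular:
  assumes fin: "finite (carrier G)" and c: "c \<in> cyc_classes G" and d: "d \<in> cyc_classes G"
    and ne: "fixed_lcosets G (cls_rep c) (cls_rep d) \<noteq> {}"
  shows "c = d \<or> card (cls_rep d) < card (cls_rep c)"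
proof -
  have Hc: "subgroup (cls_rep c) G" "cls_rep c \<subseteq> carrier G"
    using subgroup_cls_rep[OF c] subgroup.subset by blast+
  have Hd: "cls_rep d \<subseteq> carrier G"
    using subgroup_cls_rep[OF d] subgroup.subset by blast
  obtain x where x: "x \<in> carrier G" "cls_rep d \<subseteq> conjugate G x (cls_rep c)"
    using fixed_lcosets_nonempty_imp_subset_conjugate[OF Hc(1) Hd ne] .
  have fin_conj: "finite (conjugate G x (cls_rep c))"
    using fin conjugate_subset_carrier[OF x(1) Hc(2)] finite_subset by blast
  have card_conj: "card (conjugate G x (cls_rep c)) = card (cls_rep c)"
    using card_conjugate[OF x(1) Hc(2)] .
  show ?thesis
  proof (cases "card (cls_rep d) = card (cls_rep c)")
    case True
    then have "cls_rep d = conjugate G x (cls_rep c)"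
      using card_subset_eq[OF fin_conj x(2)] card_conj by simp
    then show ?thesis using cyc_classes_eqI[OF c d] x(1) unfolding conj_subgroups_iff by blast
  next
    case False
    then show ?thesis using card_mono[OF fin_conj x(2)] card_conj by simp
  qed
qed

lemma artin_alpha_spec:
  assumes fin: "finite (carrier G)"
  shows "\<And>c. c \<notin> cyc_classes G \<Longrightarrow> artin_alpha G c = 0"
    and "\<And>g. g \<in> carrier G \<Longrightarrow>
      (\<Sum>c\<in>cyc_classes G. artin_alpha G c * of_nat (perm_char G (cls_rep c) g)) = 1"
proof -
  define a where "a c d = (of_nat (card (fixed_lcosets G (cls_rep c) (cls_rep d))) :: rat)" for c d
  have "\<exists>!\<alpha>. solves_linear_system (cyc_classes G) a (\<lambda>_. 1) \<alpha>"
  proof (rule unitriangular_system_unique_solution[OF finite_cyc_classes[OF fin]])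
    fix c d assume "c \<in> cyc_classes G" "d \<in> cyc_classes G" "a c d \<noteq> 0"
    then show "c = d \<or> card (cls_rep d) < card (cls_rep c)"
      using fixed_lcosets_cls_rep_triangular[OF fin] unfolding a_def by fastforce
  next
    fix c assume "c \<in> cyc_classes G"
    then show "a c c \<noteq> 0"
      using self_in_fixed_lcosets finite_fixed_lcosets[OF fin] subgroup_cls_rep unfolding a_def
      by (metis card_0_eq empty_iff of_nat_eq_0_iff)
  qed
  then have "\<exists>!\<alpha>. (\<forall>c. c \<notin> cyc_classes G \<longrightarrow> \<alpha> c = 0) \<and>
      (\<forall>g\<in>carrier G. (\<Sum>c\<in>cyc_classes G. \<alpha> c * of_nat (perm_char G (cls_rep c) g)) = (1::rat))"
    unfolding solves_linear_system_def a_def by (simp only: artin_system_iff_cls_rep_system[OF fin])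
  from theI'[OF this]
  show "\<And>c. c \<notin> cyc_classes G \<Longrightarrow> artin_alpha G c = 0"
    and "\<And>g. g \<in> carrier G \<Longrightarrow>
      (\<Sum>c\<in>cyc_classes G. artin_alpha G c * of_nat (perm_char G (cls_rep c) g)) = 1"
    unfolding artin_alpha_def by auto
qed

section \<open>The regulator constant of the trivial lattice\<close>

lemma sum_ord_weight_generate:
  assumes fin: "finite (carrier G)" and p: "Factorial_Ring.prime p" and g: "g \<in> carrier G"
  shows "(\<Sum>h\<in>generate G {g}. ord_weight p (ord h)) = of_nat (ord g * multiplicity p (ord g))"
proof -
  define n where "n = ord g"
  have "n > 0" using ord_ge_1[OF fin g] n_def by simp
  have gen: "generate G {g} = (\<lambda>k. g [^] k) ` {..<n}"
    using generate_pow_nat[OF g] ord_elems_inf_carrier[OF g] \<open>n > 0\<close> n_def by auto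
  have "inj_on (\<lambda>k. g [^] k) {..<n}"
    using ord_inj[OF g] \<open>n > 0\<close> n_def by (simp add: atLeast0AtMost lessThan_Suc_atMost[symmetric])
  then have "(\<Sum>h\<in>generate G {g}. ord_weight p (ord h)) = (\<Sum>k<n. ord_weight p (ord (g [^] k)))"
    unfolding gen by (simp add: sum.reindex)
  also have "\<dots> = (\<Sum>k<n. ord_weight p (n div gcd n k))"
    using ord_pow_gen[OF g] n_def by (intro sum.cong) auto
  also have "\<dots> = of_nat (n * multiplicity p n)"
    using sum_ord_weight_div_gcd[OF p \<open>n > 0\<close>] .
  finally show ?thesis unfolding n_def .
qed

lemma sum_ord_weight_perm_char_cyclic:
  assumes fin: "finite (carrier G)" and p: "Factorial_Ring.prime p" and H: "H \<in> cyclic_subgroups G"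
  shows "(\<Sum>g\<in>carrier G. ord_weight p (ord g) * of_nat (perm_char G H g))
    = of_nat (order G * multiplicity p (card H))"
proof -
  obtain h where h: "h \<in> carrier G" "H = generate G {h}"
    using H unfolding cyclic_subgroups_def by blast
  have "(\<Sum>g\<in>carrier G. ord_weight p (ord g) * of_nat (perm_char G H g))
      = of_nat (card (lcosets H)) * (\<Sum>k\<in>H. ord_weight p (ord k))"
    by (rule sum_perm_char_class_function[OF fin subgroup_if_cyclic[OF H]]) (simp add: ord_conjugate)
  also have "\<dots> = of_nat (card (lcosets H) * card H * multiplicity p (card H))"
    using sum_ord_weight_generate[OF fin p h(1)] generate_pow_card[OF h(1)] h(2) by simp
  also have "\<dots> = of_nat (order G * multiplicity p (card H))"
    using l_lagrange[OF fin subgroup_if_cyclic[OF H]] by simp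
  finally show ?thesis .
qed

lemma vp_regconst_trivial_artin_relation:
  assumes fin: "finite (carrier G)"
  shows "vp_regconst_trivial G p (artin_relation G) = - of_nat (multiplicity p (order G))
    + (\<Sum>c\<in>cyc_classes G. artin_alpha G c * of_nat (multiplicity p (card (cls_rep c))))"
proof -
  define S where "S = {K. subgroup K G}"
  define m where "m K = (of_nat (multiplicity p (card K)) :: rat)" for K :: "'a set"
  have "finite S"
    using fin subgroup.subset unfolding S_def by (auto intro: finite_subset[of _ "Pow (carrier G)"])
  have "of_int (rat_vp p (1 / of_nat (card K))) = - m K" if "K \<in> S" for K
  proof -
    have "card K > 0"
      using that fin subgroup.subset subgroup.one_closed unfolding S_def
      by (metis card_gt_0_iff empty_iff finite_subset mem_Collect_eq)
    then show ?thesis unfolding m_def by (simp add: rat_vp_one_div_of_nat)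
  qed
  then have "vp_regconst_trivial G p (artin_relation G) = - (\<Sum>K\<in>S. artin_relation G K * m K)"
    unfolding vp_regconst_trivial_def S_def[symmetric] by (simp add: sum_negf)
  also have "(\<Sum>K\<in>S. artin_relation G K * m K) = (\<Sum>K\<in>S. if K = carrier G then m K else 0)
      - (\<Sum>K\<in>S. \<Sum>c\<in>cyc_classes G. if cls_rep c = K then artin_alpha G c * m K else 0)"
    unfolding sum_subtractf[symmetric] artin_relation_def left_diff_distrib sum_distrib_right
    by (intro sum.cong refl arg_cong2[where f = minus]) auto
  also have "(\<Sum>K\<in>S. if K = carrier G then m K else 0) = m (carrier G)"
    using \<open>finite S\<close> subgroup_self unfolding S_def by simp
  also have "(\<Sum>K\<in>S. \<Sum>c\<in>cyc_classes G. if cls_rep c = K then artin_alpha G c * m K else 0)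
      = (\<Sum>c\<in>cyc_classes G. artin_alpha G c * m (cls_rep c))"
    using \<open>finite S\<close> subgroup_cls_rep unfolding S_def
    by (subst sum.swap) (intro sum.cong; simp)
  finally show ?thesis unfolding m_def order_def by simp
qed

lemma artin_alpha_weighted_multiplicity_sum:
  assumes fin: "finite (carrier G)" and p: "Factorial_Ring.prime p"
  shows "of_nat (order G) * (\<Sum>c\<in>cyc_classes G. artin_alpha G c * of_nat (multiplicity p (card (cls_rep c))))
    = (\<Sum>g\<in>carrier G. ord_weight p (ord g))"
proof -
  have "of_nat (order G) * (\<Sum>c\<in>cyc_classes G. artin_alpha G c * of_nat (multiplicity p (card (cls_rep c))))
      = (\<Sum>c\<in>cyc_classes G. artin_alpha G c *
           (\<Sum>g\<in>carrier G. ord_weight p (ord g) * of_nat (perm_char G (cls_rep c) g)))"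
    unfolding sum_distrib_left
    using sum_ord_weight_perm_char_cyclic[OF fin p cls_rep_mem_cyc_classes(1)]
    by (intro sum.cong) (simp_all add: sum_distrib_left[symmetric] mult_ac)
  also have "\<dots> = (\<Sum>g\<in>carrier G. ord_weight p (ord g) *
      (\<Sum>c\<in>cyc_classes G. artin_alpha G c * of_nat (perm_char G (cls_rep c) g)))"
    by (simp add: sum_distrib_left mult_ac sum.swap[of _ "cyc_classes G"])
  also have "\<dots> = (\<Sum>g\<in>carrier G. ord_weight p (ord g))"
    using artin_alpha_spec(2)[OF fin] by simp
  finally show ?thesis .
qed

end

theorem lemma5p8:
  fixes G :: "('a, 'b) monoid_scheme" and p :: nat
  assumes "group G" and "finite (carrier G)" and "Factorial_Ring.prime p"
  shows "vp_regconst_trivial G p (artin_relation G) =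
     - of_nat (multiplicity p (card (carrier G)))
     + (\<Sum>g\<in>carrier G. of_nat (multiplicity p (group.ord G g))) / of_nat (card (carrier G))
     + of_nat (card {g \<in> carrier G. p dvd group.ord G g})
         / (of_nat (card (carrier G)) * (of_nat p - 1))"
proof -
  interpret group G by fact
  have n: "(of_nat (card (carrier G)) :: rat) \<noteq> 0"
    using assms(2) one_closed by (auto simp: card_gt_0_iff)
  have "(\<Sum>c\<in>cyc_classes G. artin_alpha G c * of_nat (multiplicity p (card (cls_rep c))))
      = (\<Sum>g\<in>carrier G. ord_weight p (ord g)) / of_nat (card (carrier G))"
    using artin_alpha_weighted_multiplicity_sum[OF assms(2,3)] n unfolding order_def
    by (simp add: eq_divide_eq mult.commute)
  also have "(\<Sum>g\<in>carrier G. ord_weight p (ord g)) = (\<Sum>g\<in>carrier G. of_nat (multiplicity p (ord g)))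
      + of_nat (card {g \<in> carrier G. p dvd ord g}) / (of_nat p - 1)"
    using assms(2) by (simp add: ord_weight_def sum.distrib sum.If_cases Int_def)
  finally show ?thesis
    using vp_regconst_trivial_artin_relation[OF assms(2)] unfolding order_def
    by (simp add: add_divide_distrib mult.commute)
qed

end
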